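(* Let $(K,\mathrm{val})$ be a valued field in which every strict unit admits a square root, let $A$ be a subring with $B\subseteq A\subseteq K$, $H=\mathrm{val}(A^\times)$, and let $\mathcal M$ be a quasi-quadratic module in $A$. Then: (1) $M_g^A(\mathcal M)$ is a quasi-quadratic module in $F$ for every $g\in G$; (2) if $g_1,g_2\in H\cup G_{\ge e}$ and $[\![g_1]\!]=[\![g_2]\!]$, then $M_{g_1}^A(\mathcal M)=M_{g_2}^A(\mathcal M)$; (3) if $g_1,g_2\in H\cup G_{\ge e}$, $\overline{g_1}=\overline{g_2}$ and $g_1\le g_2$, then $M_{g_1}^A(\mathcal M)\subseteq M_{g_2}^A(\mathcal M)$.
   Context: Let $(G,\le)$ be a totally ordered abelian group written multiplicatively with identity $e$; $G_{\ge e}=\{g\in G:g\ge e\}$, $G^2=\{g^2:g\in G\}$. Let $(K,\mathrm{val})$ be a valued field with surjective valuation $\mathrm{val}:K\to G\cup\{\infty\}$, valuation ring $B=\{x:\mathrm{val}(x)\ge e\}$, residue map $\pi:B\to F$, residue field $F$. A strict unit is $x\in B^\times$ with $\pi(x)=1$. For a subring $A$ with $B\subseteq A\subseteq K$ put $H=\mathrm{val}(A^\times)$ (a convex subgroup of $G$). For $g\in G$: $\overline g$ is its class in $G/G^2$, $[\![g]\!]$ its class in $G/H^2$. A quasi-quadratic module in a commutative ring $R$ is a subset $M\subseteq R$ with $M+M\subseteq M$ and $a^2M\subseteq M$ for all $a\in R$. A pseudo-angular component map is a map $\mathrm{p.an}:K^\times\to F^\times$ such that: (1) $\mathrm{p.an}(u)=\pi(u)$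 for $u\in B^\times$; (2) $\mathrm{p.an}(ux)=\pi(u)\mathrm{p.an}(x)$ for $u\in B^\times,x\in K^\times$; (3) for all $g\in G$, $c\in F^\times$ there is $w\in K$ with $\mathrm{val}(w)=g$, $\mathrm{p.an}(w)=c$; (4) for nonzero $x_1,x_2$ with $x_1+x_2\ne0$: if $\mathrm{val}(x_1)<\mathrm{val}(x_2)$ then $\mathrm{p.an}(x_1+x_2)=\mathrm{p.an}(x_1)$; if $\mathrm{val}(x_1)=\mathrm{val}(x_2)$ and $\mathrm{p.an}(x_1)+\mathrm{p.an}(x_2)\ne0$ then $\mathrm{val}(x_1+x_2)=\mathrm{val}(x_1)$ and $\mathrm{p.an}(x_1+x_2)=\mathrm{p.an}(x_1)+\mathrm{p.an}(x_2)$; (5) if $x,y\in K^\times$, $\overline{\mathrm{val}(x)}=\overline{\mathrm{val}(y)}$ and $\mathrm{p.an}(x)=\mathrm{p.an}(y)$ then $y=u^2x$ for some $u\in K^\times$; (6) for $a,u\in K^\times$ there is $k\in F^\times$ with $\mathrm{p.an}(au^2)=\mathrm{p.an}(a)k^2$. Such a map exists under the hypotheses; fix one. For a quasi-quadratic module $\mathcal M$ in $A$ and $g\in G$: $$M_g^A(\mathcal M)=\{\mathrm{p.an}(x):\ x\in\mathcal M\setminus\{0\},\ \mathrm{val}(x)=g\}\cup\{0\}\subseteq F.$$ *)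

theory Defs
  imports Main
begin

text \<open>The value group G is written additively: a linearly ordered abelian group
  'g with identity 0 (the paper's e), and g^2 becomes g + g.
  The valuation takes values in 'g option, None playing the role of infinity.\<close>

definition valuation :: "('k::field \<Rightarrow> 'g::linordered_ab_group_add option) \<Rightarrow> bool" where
  "valuation val \<longleftrightarrow>
     (\<forall>x. val x = None \<longleftrightarrow> x = 0) \<and>
     (\<forall>x y. x \<noteq> 0 \<longrightarrow> y \<noteq> 0 \<longrightarrow> val (x * y) = Some (the (val x) + the (val y))) \<and>
     (\<forall>x y. x \<noteq> 0 \<longrightarrow> y \<noteq> 0 \<longrightarrow> x + y \<noteq> 0 \<longrightarrow>
        min (the (val x)) (the (val y)) \<le> the (val (x + y))) \<and>
     (\<forall>g. \<exists>x. val x = Some g)"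

definition vring :: "('k::field \<Rightarrow> 'g::linordered_ab_group_add option) \<Rightarrow> 'k set" where
  "vring val = {x. x = 0 \<or> 0 \<le> the (val x)}"

text \<open>pi is the residue map B -> F: a surjective ring homomorphism on B whose kernel
  is the maximal ideal of B (values outside B are irrelevant).\<close>
definition residue_map ::
  "('k::field \<Rightarrow> 'g::linordered_ab_group_add option) \<Rightarrow> ('k \<Rightarrow> 'f::field) \<Rightarrow> bool" where
  "residue_map val \<pi> \<longleftrightarrow>
     (\<forall>x\<in>vring val. \<forall>y\<in>vring val. \<pi> (x + y) = \<pi> x + \<pi> y \<and> \<pi> (x * y) = \<pi> x * \<pi> y) \<and>
     \<pi> 1 = 1 \<and>
     (\<forall>x\<in>vring val. \<pi> x = 0 \<longleftrightarrow> (x = 0 \<or> 0 < the (val x))) \<and>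
     \<pi> ` vring val = UNIV"

definition strict_unit ::
  "('k::field \<Rightarrow> 'g::linordered_ab_group_add option) \<Rightarrow> ('k \<Rightarrow> 'f::field) \<Rightarrow> 'k \<Rightarrow> bool" where
  "strict_unit val \<pi> x \<longleftrightarrow> val x = Some 0 \<and> \<pi> x = 1"

definition intermediate_ring ::
  "('k::field \<Rightarrow> 'g::linordered_ab_group_add option) \<Rightarrow> 'k set \<Rightarrow> bool" where
  "intermediate_ring val A \<longleftrightarrow>
     vring val \<subseteq> A \<and> 0 \<in> A \<and> 1 \<in> A \<and>
     (\<forall>x\<in>A. \<forall>y\<in>A. x + y \<in> A \<and> x - y \<in> A \<and> x * y \<in> A)"

definition ring_units :: "'k::field set \<Rightarrow> 'k set" where
  "ring_units A = {a \<in> A. a \<noteq> 0 \<and> inverse a \<in> A}"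

definition Hgrp ::
  "('k::field \<Rightarrow> 'g::linordered_ab_group_add option) \<Rightarrow> 'k set \<Rightarrow> 'g set" where
  "Hgrp val A = (\<lambda>a. the (val a)) ` ring_units A"

text \<open>Equality of classes in G/G^2 and in G/H^2.\<close>
definition same_sq_class :: "'g::ab_group_add \<Rightarrow> 'g \<Rightarrow> bool" where
  "same_sq_class g1 g2 \<longleftrightarrow> (\<exists>h. g1 - g2 = h + h)"

definition same_class_mod_sq :: "'g::ab_group_add set \<Rightarrow> 'g \<Rightarrow> 'g \<Rightarrow> bool" where
  "same_class_mod_sq H g1 g2 \<longleftrightarrow> (\<exists>h\<in>H. g1 - g2 = h + h)"

definition qq_module :: "'a::comm_ring_1 set \<Rightarrow> 'a set \<Rightarrow> bool" where
  "qq_module R M \<longleftrightarrow> M \<subseteq> R \<and> (\<forall>x\<in>M. \<forall>y\<in>M. x + y \<in> M) \<and> (\<forall>a\<in>R. \<forall>x\<in>M. a^2 * x \<in> M)"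

definition pseudo_angular ::
  "('k::field \<Rightarrow> 'g::linordered_ab_group_add option) \<Rightarrow> ('k \<Rightarrow> 'f::field) \<Rightarrow> ('k \<Rightarrow> 'f) \<Rightarrow> bool" where
  "pseudo_angular val \<pi> pan \<longleftrightarrow>
     (\<forall>x. x \<noteq> 0 \<longrightarrow> pan x \<noteq> 0) \<and>
     (\<forall>u. val u = Some 0 \<longrightarrow> pan u = \<pi> u) \<and>
     (\<forall>u x. val u = Some 0 \<longrightarrow> x \<noteq> 0 \<longrightarrow> pan (u * x) = \<pi> u * pan x) \<and>
     (\<forall>g c. c \<noteq> 0 \<longrightarrow> (\<exists>w. val w = Some g \<and> pan w = c)) \<and>
     (\<forall>x1 x2. x1 \<noteq> 0 \<longrightarrow> x2 \<noteq> 0 \<longrightarrow> x1 + x2 \<noteq> 0 \<longrightarrow>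
        (the (val x1) < the (val x2) \<longrightarrow> pan (x1 + x2) = pan x1) \<and>
        (val x1 = val x2 \<longrightarrow> pan x1 + pan x2 \<noteq> 0 \<longrightarrow>
           val (x1 + x2) = val x1 \<and> pan (x1 + x2) = pan x1 + pan x2)) \<and>
     (\<forall>x y. x \<noteq> 0 \<longrightarrow> y \<noteq> 0 \<longrightarrow> same_sq_class (the (val x)) (the (val y)) \<longrightarrow>
        pan x = pan y \<longrightarrow> (\<exists>u. u \<noteq> 0 \<and> y = u^2 * x)) \<and>
     (\<forall>a u. a \<noteq> 0 \<longrightarrow> u \<noteq> 0 \<longrightarrow> (\<exists>k. k \<noteq> 0 \<and> pan (a * u^2) = pan a * k^2))"

definition Mg ::
  "('k::field \<Rightarrow> 'g::linordered_ab_group_add option) \<Rightarrow> ('k \<Rightarrow> 'f::field) \<Rightarrow> 'k set \<Rightarrow> 'g \<Rightarrow> 'f set" where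
  "Mg val pan M g = {pan x | x. x \<in> M \<and> x \<noteq> 0 \<and> val x = Some g} \<union> {0}"

end

theory Submission
  imports Defs
begin

text \<open>Every element of \<open>M\<^sub>g\<close> is the pseudo-angular component of some \<open>x \<in> M\<close> of value \<open>g\<close>.
  Multiplying \<open>x\<close> by the square of a unit \<open>u\<close> keeps the value and multiplies the component
  by \<open>\<pi>(u)\<^sup>2\<close>, which gives closure under squares; adding two such \<open>x\<close> adds components by the
  additivity axiom of \<open>pan\<close>. Multiplying \<open>x\<close> by \<open>z\<^sup>2\<close> with \<open>z \<in> A\<close> shifts the value by \<open>2 val(z)\<close>
  and multiplies the component by some square \<open>k\<^sup>2\<close>, which a unit lifting \<open>k\<^sup>-\<^sup>1\<close> undoes;
  hence \<open>M\<^sub>g \<subseteq> M\<^sub>g\<^sub>+\<^sub>2\<^sub>d\<close> whenever some element of \<open>A\<close> has value \<open>d\<close>. Units of \<open>A\<close> give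
  shifts in both directions, elements of \<open>B\<close> give all shifts \<open>d \<ge> 0\<close>.\<close>

lemma valuation_eq_None_iff: "valuation val \<Longrightarrow> val x = None \<longleftrightarrow> x = 0"
  unfolding valuation_def by simp

lemma valuation_Some_imp_nonzero: "valuation val \<Longrightarrow> val x = Some g \<Longrightarrow> x \<noteq> 0"
  by (metis valuation_eq_None_iff option.distinct(1))

lemma valuation_mult:
  "valuation val \<Longrightarrow> x \<noteq> 0 \<Longrightarrow> y \<noteq> 0 \<Longrightarrow> val (x * y) = Some (the (val x) + the (val y))"
  unfolding valuation_def by blast

lemma valuation_mult_Some:
  assumes "valuation val" "val x = Some g" "val y = Some h"
  shows "val (x * y) = Some (g + h)"
proof -
  have "x \<noteq> 0" "y \<noteq> 0" using assms valuation_Some_imp_nonzero by blast+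
  then show ?thesis using assms valuation_mult by fastforce
qed

lemma valuation_one:
  assumes "valuation val" shows "val 1 = Some 0"
proof -
  obtain g where g: "val 1 = Some g" using valuation_eq_None_iff[OF assms, of 1] by auto
  have "Some g = Some (g + g)" using valuation_mult_Some[OF assms g g] g by simp
  then show ?thesis using g by simp
qed

lemma valuation_minus_one:
  assumes "valuation val" shows "val (-1) = Some 0"
proof -
  obtain g where g: "val (-1) = Some g" using valuation_eq_None_iff[OF assms, of "-1"] by auto
  have "val ((-1) * (-1)) = Some (g + g)" using valuation_mult_Some[OF assms g g] .
  then have "g + g = 0" using valuation_one[OF assms] by simp
  then show ?thesis using g by (simp add: double_zero)
qed

lemma valuation_inverse:
  assumes "valuation val" "val x = Some g" shows "val (inverse x) = Some (- g)"
proof -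
  have "x \<noteq> 0" using assms valuation_Some_imp_nonzero by blast
  then obtain h where h: "val (inverse x) = Some h" using valuation_eq_None_iff[OF assms(1)] by fastforce
  have "val (x * inverse x) = Some (g + h)" using valuation_mult_Some[OF assms h] .
  then have "g + h = 0" using \<open>x \<noteq> 0\<close> valuation_one[OF assms(1)] by simp
  then show ?thesis using h by (simp add: eq_neg_iff_add_eq_0 add.commute)
qed

lemma vring_if_nonneg: "val x = Some g \<Longrightarrow> 0 \<le> g \<Longrightarrow> x \<in> vring val"
  unfolding vring_def by simp

lemma residue_map_mult:
  "residue_map val \<pi> \<Longrightarrow> x \<in> vring val \<Longrightarrow> y \<in> vring val \<Longrightarrow> \<pi> (x * y) = \<pi> x * \<pi> y"
  unfolding residue_map_def by blast

lemma residue_map_lift_unit: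
  assumes "residue_map val \<pi>" "valuation val" "c \<noteq> 0"
  obtains u where "val u = Some 0" "\<pi> u = c"
proof -
  obtain u where u: "u \<in> vring val" "\<pi> u = c"
    using assms(1) unfolding residue_map_def by (metis UNIV_I imageE)
  have "\<not> (u = 0 \<or> 0 < the (val u))"
    using u assms(1,3) unfolding residue_map_def by blast
  then have "val u = Some 0"
    using u(1) valuation_eq_None_iff[OF assms(2), of u] by (auto simp: vring_def)
  with u(2) show thesis using that by blast
qed

lemma pseudo_angular_mult_unit:
  "pseudo_angular val \<pi> pan \<Longrightarrow> val u = Some 0 \<Longrightarrow> x \<noteq> 0 \<Longrightarrow> pan (u * x) = \<pi> u * pan x"
  unfolding pseudo_angular_def by blast

lemma pseudo_angular_mult_square:
  "pseudo_angular val \<pi> pan \<Longrightarrow> a \<noteq> 0 \<Longrightarrow> u \<noteq> 0 \<Longrightarrow> \<exists>k. k \<noteq> 0 \<and> pan (a * u\<^sup>2) = pan a * k\<^sup>2"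
  unfolding pseudo_angular_def by blast

lemma pseudo_angular_add_same_value:
  "pseudo_angular val \<pi> pan \<Longrightarrow> x \<noteq> 0 \<Longrightarrow> y \<noteq> 0 \<Longrightarrow> x + y \<noteq> 0 \<Longrightarrow> val x = val y \<Longrightarrow>
    pan x + pan y \<noteq> 0 \<Longrightarrow> val (x + y) = val x \<and> pan (x + y) = pan x + pan y"
  unfolding pseudo_angular_def by blast

lemma pseudo_angular_minus:
  assumes "pseudo_angular val \<pi> pan" "residue_map val \<pi>" "valuation val" "x \<noteq> 0"
  shows "pan (- x) = - pan x"
proof -
  have m1: "val (-1) = Some 0" using valuation_minus_one[OF assms(3)] .
  have one: "1 \<in> vring val" "-1 \<in> vring val"
    using vring_if_nonneg m1 valuation_one[OF assms(3)] by fastforce+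
  then have "\<pi> (1 + -1) = \<pi> 1 + \<pi> (-1)" "0 \<in> vring val"
    using assms(2) unfolding residue_map_def vring_def by blast+
  moreover have "\<pi> 0 = 0" "\<pi> 1 = 1"
    using \<open>0 \<in> vring val\<close> assms(2) unfolding residue_map_def by auto
  ultimately have "\<pi> (-1) = -1" by (simp add: add_eq_0_iff)
  then show ?thesis
    using pseudo_angular_mult_unit[OF assms(1) m1 assms(4)] by simp
qed

lemma unit_square_scaling:
  assumes "valuation val" "residue_map val \<pi>" "pseudo_angular val \<pi> pan"
    and u: "val u = Some 0" and x: "x \<noteq> 0" "val x = Some g"
  shows "val (u\<^sup>2 * x) = Some g" "pan (u\<^sup>2 * x) = (\<pi> u)\<^sup>2 * pan x"
proof -
  have uu: "val (u * u) = Some 0" using valuation_mult_Some[OF assms(1) u u] by simp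
  show "val (u\<^sup>2 * x) = Some g"
    using valuation_mult_Some[OF assms(1) uu x(2)] by (simp add: power2_eq_square)
  have "u \<in> vring val" using vring_if_nonneg[of val, OF u] by simp
  then have "\<pi> (u * u) = (\<pi> u)\<^sup>2"
    using residue_map_mult[OF assms(2)] by (simp add: power2_eq_square)
  then show "pan (u\<^sup>2 * x) = (\<pi> u)\<^sup>2 * pan x"
    using pseudo_angular_mult_unit[OF assms(3) uu x(1)] by (simp add: power2_eq_square)
qed

lemma intermediate_ring_mult: "intermediate_ring val A \<Longrightarrow> x \<in> A \<Longrightarrow> y \<in> A \<Longrightarrow> x * y \<in> A"
  unfolding intermediate_ring_def by blast

lemma intermediate_ring_vring: "intermediate_ring val A \<Longrightarrow> x \<in> vring val \<Longrightarrow> x \<in> A"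
  unfolding intermediate_ring_def by blast

lemma qq_module_add: "qq_module R M \<Longrightarrow> x \<in> M \<Longrightarrow> y \<in> M \<Longrightarrow> x + y \<in> M"
  unfolding qq_module_def by blast

lemma qq_module_square_mult: "qq_module R M \<Longrightarrow> a \<in> R \<Longrightarrow> x \<in> M \<Longrightarrow> a\<^sup>2 * x \<in> M"
  unfolding qq_module_def by blast

lemma Mg_iff:
  "c \<in> Mg val pan M g \<longleftrightarrow> c = 0 \<or> (\<exists>x\<in>M. x \<noteq> 0 \<and> val x = Some g \<and> c = pan x)"
  unfolding Mg_def by blast

context
  fixes val :: "'k::field \<Rightarrow> 'g::linordered_ab_group_add option"
    and \<pi> :: "'k \<Rightarrow> 'f::field" and pan :: "'k \<Rightarrow> 'f" and A M :: "'k set"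
  assumes val: "valuation val" and res: "residue_map val \<pi>" and pan: "pseudo_angular val \<pi> pan"
    and A: "intermediate_ring val A" and M: "qq_module A M"
begin

lemma Mg_add_closed:
  assumes a: "a \<in> Mg val pan M g" and b: "b \<in> Mg val pan M g"
  shows "a + b \<in> Mg val pan M g"
proof (cases "a = 0 \<or> b = 0 \<or> a + b = 0")
  case True
  then show ?thesis using a b by (auto simp: Mg_iff)
next
  case False
  then obtain x y where x: "x \<in> M" "x \<noteq> 0" "val x = Some g" "a = pan x"
    and y: "y \<in> M" "y \<noteq> 0" "val y = Some g" "b = pan y"
    using a b by (auto simp: Mg_iff)
  have "x + y \<noteq> 0"
  proof
    assume "x + y = 0"
    then have "y = - x" by (simp add: add_eq_0_iff)
    then have "b = - a" using x(4) y(4) pseudo_angular_minus[OF pan res val x(2)] by simp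
    with False show False by simp
  qed
  then have "val (x + y) = Some g" "pan (x + y) = a + b"
    using pseudo_angular_add_same_value[OF pan x(2) y(2)] x y False by auto
  with \<open>x + y \<noteq> 0\<close> qq_module_add[OF M x(1) y(1)] show ?thesis
    by (auto simp: Mg_iff)
qed

lemma Mg_square_mult_closed:
  assumes a: "a \<in> Mg val pan M g"
  shows "c\<^sup>2 * a \<in> Mg val pan M g"
proof (cases "c = 0 \<or> a = 0")
  case True
  then show ?thesis by (auto simp: Mg_iff)
next
  case False
  then obtain x where x: "x \<in> M" "x \<noteq> 0" "val x = Some g" "a = pan x"
    using a by (auto simp: Mg_iff)
  obtain u where u: "val u = Some 0" "\<pi> u = c"
    using residue_map_lift_unit[OF res val] False by blast
  have "u\<^sup>2 * x \<in> M"
    using qq_module_square_mult[OF M intermediate_ring_vring[OF A vring_if_nonneg[of val, OF u(1)]] x(1)]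
    by simp
  moreover have "u\<^sup>2 * x \<noteq> 0" using u(1) x(2) valuation_eq_None_iff[OF val, of u] by auto
  moreover have "c\<^sup>2 * a = pan (u\<^sup>2 * x)" "val (u\<^sup>2 * x) = Some g"
    using unit_square_scaling[OF val res pan u(1) x(2,3)] x(4) u(2) by simp_all
  ultimately show ?thesis unfolding Mg_iff by blast
qed

lemma qq_module_Mg: "qq_module UNIV (Mg val pan M g)"
  unfolding qq_module_def using Mg_add_closed Mg_square_mult_closed by blast

lemma square_shift_same_component:
  assumes x: "x \<in> M" "x \<noteq> 0" "val x = Some g" and z: "z \<in> A" "val z = Some d"
  shows "\<exists>y\<in>M. y \<noteq> 0 \<and> val y = Some (g + d + d) \<and> pan y = pan x"
proof -
  have "z \<noteq> 0" using valuation_Some_imp_nonzero[OF val z(2)] .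
  then obtain k where k: "k \<noteq> 0" "pan (x * z\<^sup>2) = pan x * k\<^sup>2"
    using pseudo_angular_mult_square[OF pan x(2)] by blast
  obtain u where u: "val u = Some 0" "\<pi> u = inverse k"
    using residue_map_lift_unit[OF res val] k(1) by (metis inverse_nonzero_iff_nonzero)
  have xz: "val (x * z\<^sup>2) = Some (g + d + d)" "x * z\<^sup>2 \<noteq> 0"
    using valuation_mult_Some[OF val x(3) valuation_mult_Some[OF val z(2) z(2)]] x(2) \<open>z \<noteq> 0\<close>
    by (simp_all add: power2_eq_square add.assoc)
  define y where "y = (u * z)\<^sup>2 * x"
  have y_eq: "y = u\<^sup>2 * (x * z\<^sup>2)" by (simp add: y_def power_mult_distrib)
  have "u * z \<in> A"
    using intermediate_ring_mult[OF A intermediate_ring_vring[OF A vring_if_nonneg[of val, OF u(1)]] z(1)]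
    by simp
  then have "y \<in> M" unfolding y_def using qq_module_square_mult[OF M _ x(1)] by blast
  moreover have "val y = Some (g + d + d)" "pan y = pan x"
    using unit_square_scaling[OF val res pan u(1) xz(2,1)] k u(2) by (simp_all add: y_eq field_simps)
  moreover have "y \<noteq> 0" using valuation_Some_imp_nonzero[OF val \<open>val y = Some (g + d + d)\<close>] .
  ultimately show ?thesis by blast
qed

lemma Mg_subset_square_shift:
  assumes "z \<in> A" "val z = Some d"
  shows "Mg val pan M g \<subseteq> Mg val pan M (g + d + d)"
  using square_shift_same_component[OF _ _ _ assms] by (fastforce simp: Mg_iff)

lemma Mg_eq_if_same_class_mod_sq:
  assumes "same_class_mod_sq (Hgrp val A) g1 g2"
  shows "Mg val pan M g1 = Mg val pan M g2"
proof -
  obtain a where a: "a \<in> ring_units A" and g: "g1 - g2 = the (val a) + the (val a)"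
    using assms unfolding same_class_mod_sq_def Hgrp_def by blast
  have "a \<noteq> 0" "a \<in> A" "inverse a \<in> A" using a unfolding ring_units_def by auto
  then have va: "val a = Some (the (val a))" using valuation_eq_None_iff[OF val] by fastforce
  have "Mg val pan M g2 \<subseteq> Mg val pan M g1"
    using Mg_subset_square_shift[OF \<open>a \<in> A\<close> va, of g2] g by (simp add: algebra_simps)
  moreover have "Mg val pan M g1 \<subseteq> Mg val pan M g2"
    using Mg_subset_square_shift[OF \<open>inverse a \<in> A\<close> valuation_inverse[OF val va], of g1] g
    by (simp add: algebra_simps)
  ultimately show ?thesis by blast
qed

lemma Mg_mono_if_same_sq_class:
  assumes "same_sq_class g1 g2" "g1 \<le> g2"
  shows "Mg val pan M g1 \<subseteq> Mg val pan M g2"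
proof -
  obtain h where h: "g1 - g2 = h + h" using assms(1) unfolding same_sq_class_def by blast
  have "0 \<le> - h" using h assms(2)
    by (metis diff_le_0_iff_le double_add_le_zero_iff_single_add_le_zero neg_0_le_iff_le)
  obtain z where z: "val z = Some (- h)" using val unfolding valuation_def by blast
  have "z \<in> A" using intermediate_ring_vring[OF A vring_if_nonneg[of val, OF z \<open>0 \<le> - h\<close>]] .
  from Mg_subset_square_shift[OF this z, of g1] h show ?thesis by (simp add: algebra_simps)
qed

end

theorem mainTheorem5:
  fixes val :: "'k::field \<Rightarrow> 'g::linordered_ab_group_add option"
    and \<pi> :: "'k \<Rightarrow> 'f::field"
    and pan :: "'k \<Rightarrow> 'f"
    and A M :: "'k set"
  assumes hval: "valuation val"
    and hres: "residue_map val \<pi>"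
    and hsqrt: "\<forall>x. strict_unit val \<pi> x \<longrightarrow> (\<exists>y. y^2 = x)"
    and hpan: "pseudo_angular val \<pi> pan"
    and hA: "intermediate_ring val A"
    and hM: "qq_module A M"
  shows "(\<forall>g. qq_module (UNIV :: 'f set) (Mg val pan M g))
    \<and> (\<forall>g1 g2. g1 \<in> Hgrp val A \<union> {g. 0 \<le> g} \<longrightarrow> g2 \<in> Hgrp val A \<union> {g. 0 \<le> g} \<longrightarrow>
          same_class_mod_sq (Hgrp val A) g1 g2 \<longrightarrow> Mg val pan M g1 = Mg val pan M g2)
    \<and> (\<forall>g1 g2. g1 \<in> Hgrp val A \<union> {g. 0 \<le> g} \<longrightarrow> g2 \<in> Hgrp val A \<union> {g. 0 \<le> g} \<longrightarrow>
          same_sq_class g1 g2 \<longrightarrow> g1 \<le> g2 \<longrightarrow> Mg val pan M g1 \<subseteq> Mg val pan M g2)"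
  using qq_module_Mg[OF hval hres hpan hA hM]
    Mg_eq_if_same_class_mod_sq[OF hval hres hpan hA hM]
    Mg_mono_if_same_sq_class[OF hval hres hpan hA hM]
  by blast

end
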